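(* Let $n\ge1$, let $\beta$ be a braid on $n$ strands with exponent sum $w$, and let $\Delta=\Delta_n$ be the Garside positive half-twist braid on $n$ strands. Then the coefficient of $v^{w-n+1}$ in $P_{\widehat\beta}(v,z)$ equals $(-1)^{n-1}$ times the coefficient of $v^{w+n^2-1}$ in $P_{\widehat{\beta\Delta^2}}(v,z)$ (coefficients regarded as Laurent polynomials in $z$).
   Context: For a braid $\gamma$, $\widehat\gamma$ denotes its usual closure, oriented by the braid direction. The Homfly polynomial $P_L(v,z)$ of an oriented link $L$ is the isotopy invariant normalized by $P=1$ on the unknot and satisfying $v^{-1}P_{L_+}-vP_{L_-}=zP_{L_0}$, where $L_+,L_-,L_0$ differ at one crossing which is positive, negative, resp. smoothed. Equivalently $P_D=v^{\mathrm{writhe}(D)}H_D$ with $H$ the framed Homfly polynomial ($H_{L_+}-H_{L_-}=zH_{L_0}$, positive kink multiplies by $v$, negative kink by $v^{-1}$, $H=1$ on the crossingless unknot). *)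

theory Defs
  imports Main "HOL-Library.Poly_Mapping" "HOL-Library.Product_Plus"
begin

text \<open>Laurent polynomials in two variables v, z with integer coefficients:
  finitely supported maps from exponent pairs (a,b) (monomial v^a z^b) to int,
  with convolution product.\<close>
type_synonym laurent2 = "(int \<times> int) \<Rightarrow>\<^sub>0 int"

definition mono :: "int \<Rightarrow> int \<Rightarrow> laurent2" where
  "mono a b = Poly_Mapping.single (a, b) 1"

definition coeff2 :: "laurent2 \<Rightarrow> int \<Rightarrow> int \<Rightarrow> int" where
  "coeff2 p a b = Poly_Mapping.lookup p (a, b)"

text \<open>Braid words on n strands: list of nonzero integers g with |g| \<le> n-1;
  the letter i > 0 is sigma_i, the letter -i is sigma_i^{-1}.\<close>
definition braid_word :: "nat \<Rightarrow> int list \<Rightarrow> bool" where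
  "braid_word n w \<longleftrightarrow> (\<forall>g\<in>set w. g \<noteq> 0 \<and> \<bar>g\<bar> \<le> int n - 1)"

definition exp_sum :: "int list \<Rightarrow> int" where
  "exp_sum w = sum_list (map sgn w)"

fun garside :: "nat \<Rightarrow> int list" where
  "garside 0 = []"
| "garside (Suc 0) = []"
| "garside (Suc (Suc k)) = garside (Suc k) @ rev (map int [1..<Suc (Suc k)])"

text \<open>A function assigning to each braid word on n strands the Homfly polynomial
  of its closure. The axioms: invariance under the braid group relations
  (so it is a function on braids), invariance under conjugation and both
  Markov stabilisations (so by Markov's theorem it is an isotopy invariant
  of the closure), the skein relation
  v^{-1} P(L+) - v P(L-) = z P(L0) at a braid crossing, written without
  inverses as P(L+) = v^2 P(L-) + v z P(L0), and P(unknot) = 1.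
  These axioms characterise the Homfly polynomial on closed braids.\<close>
definition is_homfly :: "(nat \<Rightarrow> int list \<Rightarrow> laurent2) \<Rightarrow> bool" where
  "is_homfly P \<longleftrightarrow>
     P 1 [] = 1
   \<and> (\<forall>n u x i. braid_word n (u @ x) \<and> braid_word n [i] \<longrightarrow>
        P n (u @ [i, -i] @ x) = P n (u @ x))
   \<and> (\<forall>n u x i j. braid_word n (u @ x) \<and> braid_word n [i, j] \<and> \<bar>\<bar>i\<bar> - \<bar>j\<bar>\<bar> \<ge> 2 \<longrightarrow>
        P n (u @ [i, j] @ x) = P n (u @ [j, i] @ x))
   \<and> (\<forall>n u x i. braid_word n (u @ x) \<and> i \<ge> 1 \<and> i + 1 \<le> int n - 1 \<longrightarrow>
        P n (u @ [i, i + 1, i] @ x) = P n (u @ [i + 1, i, i + 1] @ x))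
   \<and> (\<forall>n u x. braid_word n (u @ x) \<longrightarrow> P n (u @ x) = P n (x @ u))
   \<and> (\<forall>n u. n \<ge> 1 \<and> braid_word n u \<longrightarrow>
        P (Suc n) (u @ [int n]) = P n u \<and> P (Suc n) (u @ [- int n]) = P n u)
   \<and> (\<forall>n u x i. braid_word n (u @ x) \<and> braid_word n [i] \<and> i > 0 \<longrightarrow>
        P n (u @ [i] @ x) = mono 2 0 * P n (u @ [-i] @ x) + mono 1 1 * P n (u @ x))"

end

theory Submission
  imports Defs
begin

text \<open>The lowest coefficient (in \<open>v\<close>) of \<open>P\<close> on \<open>\<beta>\<close> and the sign-corrected highest coefficient on
  \<open>\<beta>\<Delta>\<^sup>2\<close> are both invariant under braid relations and conjugation, and obey the same recursion
  coming from the skein relation. A function with these properties on \<open>B\<^sub>n\<^sub>+\<^sub>1\<close> is determined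
  by its values on \<open>B\<^sub>n\<close> and on the words \<open>a \<sigma>\<^sub>n b\<close> with \<open>a, b \<in> B\<^sub>n\<close>, by the induction
  that also proves the Morton--Franks--Williams inequality. On such words both sides reduce to
  \<open>n\<close> strands: the lowest coefficient by the Markov moves, the highest one because
  \<open>\<Delta>\<^sub>n\<^sub>+\<^sub>1\<^sup>2 = \<Delta>\<^sub>n\<^sup>2 \<sigma>\<^sub>n\<cdots>\<sigma>\<^sub>1\<sigma>\<^sub>1\<cdots>\<sigma>\<^sub>n\<close>, where the last factor is central in \<open>B\<^sub>n\<close> and
  changes the highest coefficient only by a sign.\<close>

lemma lookup_single_one_mult:
  "Poly_Mapping.lookup (Poly_Mapping.single k (1::int) * p) c = Poly_Mapping.lookup p (c - (k::int \<times> int))"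
proof -
  have "Poly_Mapping.lookup (Poly_Mapping.single k 1 * p) c
      = (\<Sum>l. (1 when l = k) * (\<Sum>q. Poly_Mapping.lookup p q when c = l + q))"
    by (simp add: lookup_mult lookup_single when_def)
  also have "\<dots> = (\<Sum>q. Poly_Mapping.lookup p q when c = k + q)"
    by (simp add: when_mult)
  also have "\<dots> = (\<Sum>q. Poly_Mapping.lookup p q when q = c - k)"
    by (rule Sum_any.cong) (auto simp: algebra_simps eq_commute[of c])
  finally show ?thesis by simp
qed

lemma coeff2_mono_mult: "coeff2 (mono a b * p) c d = coeff2 p (c - a) (d - b)"
  by (simp add: coeff2_def mono_def lookup_single_one_mult)

lemma mono_mult: "mono a b * mono c d = mono (a + c) (b + d)"
  by (simp add: mono_def mult_single)

lemma mono_0_0: "mono 0 0 = 1"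
  by (metis mono_def single_one zero_prod_def)

lemma coeff2_one: "coeff2 1 a b = (if a = 0 \<and> b = 0 then 1 else 0)"
  by (simp add: coeff2_def lookup_one zero_prod_def)

lemma coeff2_add: "coeff2 (p + q) a b = coeff2 p a b + coeff2 q a b"
  by (simp add: coeff2_def lookup_add)

lemma coeff2_diff: "coeff2 (p - q) a b = coeff2 p a b - coeff2 q a b"
  by (simp add: coeff2_def lookup_minus)

lemma braid_word_append [simp]: "braid_word n (u @ v) \<longleftrightarrow> braid_word n u \<and> braid_word n v"
  by (auto simp: braid_word_def)

lemma braid_word_Cons [simp]: "braid_word n (g # v) \<longleftrightarrow> g \<noteq> 0 \<and> \<bar>g\<bar> \<le> int n - 1 \<and> braid_word n v"
  by (auto simp: braid_word_def)

lemma braid_word_Nil [simp]: "braid_word n []"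
  by (simp add: braid_word_def)

lemma braid_word_rev [simp]: "braid_word n (rev w) \<longleftrightarrow> braid_word n w"
  by (simp add: braid_word_def)

lemma braid_word_mono: "braid_word n w \<Longrightarrow> n \<le> m \<Longrightarrow> braid_word m w"
  by (auto simp: braid_word_def)

lemma braid_word_Suc: "braid_word n w \<Longrightarrow> braid_word (Suc n) w"
  by (auto simp: braid_word_def)

lemma braid_word_Suc_0_iff: "braid_word (Suc 0) w \<longleftrightarrow> w = []"
  by (cases w) auto

lemma exp_sum_append [simp]: "exp_sum (u @ v) = exp_sum u + exp_sum v"
  by (simp add: exp_sum_def)

lemma exp_sum_Cons [simp]: "exp_sum (g # v) = sgn g + exp_sum v"
  by (simp add: exp_sum_def)

lemma exp_sum_Nil [simp]: "exp_sum [] = 0"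
  by (simp add: exp_sum_def)

inductive braid_equiv :: "nat \<Rightarrow> int list \<Rightarrow> int list \<Rightarrow> bool" for n where
  refl: "braid_word n w \<Longrightarrow> braid_equiv n w w"
| sym: "braid_equiv n w w' \<Longrightarrow> braid_equiv n w' w"
| trans [trans]: "braid_equiv n w w' \<Longrightarrow> braid_equiv n w' w'' \<Longrightarrow> braid_equiv n w w''"
| cancel: "braid_word n (u @ x) \<Longrightarrow> braid_word n [i] \<Longrightarrow> braid_equiv n (u @ [i, -i] @ x) (u @ x)"
| far_comm: "braid_word n (u @ x) \<Longrightarrow> braid_word n [i, j] \<Longrightarrow> \<bar>\<bar>i\<bar> - \<bar>j\<bar>\<bar> \<ge> 2 \<Longrightarrow>
     braid_equiv n (u @ [i, j] @ x) (u @ [j, i] @ x)"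
| braid_rel: "braid_word n (u @ x) \<Longrightarrow> i \<ge> 1 \<Longrightarrow> i + 1 \<le> int n - 1 \<Longrightarrow>
     braid_equiv n (u @ [i, i + 1, i] @ x) (u @ [i + 1, i, i + 1] @ x)"

lemma braid_equiv_exp_sum: "braid_equiv n w w' \<Longrightarrow> exp_sum w = exp_sum w'"
  by (induction rule: braid_equiv.induct) (auto simp: sgn_if)

lemma braid_equiv_mono: "braid_equiv n w w' \<Longrightarrow> n \<le> m \<Longrightarrow> braid_equiv m w w'"
proof (induction rule: braid_equiv.induct)
  case (refl w)
  then show ?case using braid_word_mono[of n w m] by (intro braid_equiv.refl) simp
next
  case (sym w w')
  then show ?case by (metis braid_equiv.sym)
next
  case (trans w w' w'')
  then show ?case by (metis braid_equiv.trans)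
next
  case (cancel u x i)
  then show ?case using braid_word_mono[of n _ m] by (intro braid_equiv.cancel) auto
next
  case (far_comm u x i j)
  then show ?case using braid_word_mono[of n _ m] by (intro braid_equiv.far_comm) auto
next
  case (braid_rel u x i)
  then show ?case using braid_word_mono[of n _ m] by (intro braid_equiv.braid_rel) auto
qed

lemma braid_equiv_context:
  "braid_equiv n w w' \<Longrightarrow> braid_word n u \<Longrightarrow> braid_word n x \<Longrightarrow> braid_equiv n (u @ w @ x) (u @ w' @ x)"
proof (induction rule: braid_equiv.induct)
  case (refl w)
  then show ?case by (intro braid_equiv.refl) simp
next
  case (sym w w')
  then show ?case by (metis braid_equiv.sym)
next
  case (trans w w' w'')
  then show ?case by (blast intro: braid_equiv.trans)
next
  case (cancel u' x' i)
  then show ?case using braid_equiv.cancel[of n "u @ u'" "x' @ x" i] by simp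
next
  case (far_comm u' x' i j)
  then show ?case using braid_equiv.far_comm[of n "u @ u'" "x' @ x" i j] by simp
next
  case (braid_rel u' x' i)
  then show ?case using braid_equiv.braid_rel[of n "u @ u'" "x' @ x" i] by simp
qed

lemma braid_equiv_append_left: "braid_equiv n w w' \<Longrightarrow> braid_word n u \<Longrightarrow> braid_equiv n (u @ w) (u @ w')"
  using braid_equiv_context[of n w w' u "[]"] by simp

lemma braid_equiv_append_right: "braid_equiv n w w' \<Longrightarrow> braid_word n x \<Longrightarrow> braid_equiv n (w @ x) (w' @ x)"
  using braid_equiv_context[of n w w' "[]" x] by simp

lemma braid_equiv_commute_far:
  assumes "\<forall>g\<in>set w. \<bar>\<bar>g\<bar> - \<bar>h\<bar>\<bar> \<ge> 2" "braid_word n (u @ [h] @ w @ x)"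
  shows "braid_equiv n (u @ [h] @ w @ x) (u @ w @ [h] @ x)"
  using assms
proof (induction w arbitrary: u)
  case Nil
  then show ?case by (simp add: braid_equiv.refl)
next
  case (Cons g w)
  have "braid_equiv n (u @ [h, g] @ (w @ x)) (u @ [g, h] @ (w @ x))"
    using Cons.prems by (intro braid_equiv.far_comm) (auto simp: abs_minus_commute)
  also have "braid_equiv n \<dots> (u @ (g # w) @ [h] @ x)"
    using Cons.IH[of "u @ [g]"] Cons.prems by simp
  finally show ?case by simp
qed

lemma braid_equiv_top_commute:
  assumes "braid_word (N - 1) c" "braid_word (Suc N) (u @ [int N] @ c @ x)"
  shows "braid_equiv (Suc N) (u @ [int N] @ c @ x) (u @ c @ [int N] @ x)"
  using assms by (intro braid_equiv_commute_far) (auto simp: braid_word_def)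

section \<open>Functions determined by a skein recursion\<close>

definition skein_compatible ::
    "nat \<Rightarrow> ('b \<Rightarrow> 'b \<Rightarrow> 'b) \<Rightarrow> ('b \<Rightarrow> 'b \<Rightarrow> 'b) \<Rightarrow> (int list \<Rightarrow> 'b) \<Rightarrow> bool" where
  "skein_compatible n S S' f \<longleftrightarrow>
     (\<forall>w w'. braid_equiv n w w' \<longrightarrow> f w = f w') \<and>
     (\<forall>u x i. braid_word n (u @ x) \<and> braid_word n [i] \<and> i > 0 \<longrightarrow>
        f (u @ [i] @ x) = S (f (u @ [-i] @ x)) (f (u @ x)) \<and>
        f (u @ [-i] @ x) = S' (f (u @ [i] @ x)) (f (u @ x)))"

lemma skein_compatible_equiv: "skein_compatible n S S' f \<Longrightarrow> braid_equiv n w w' \<Longrightarrow> f w = f w'"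
  unfolding skein_compatible_def by blast

lemma skein_compatible_pos:
  "skein_compatible n S S' f \<Longrightarrow> braid_word n (u @ x) \<Longrightarrow> braid_word n [i] \<Longrightarrow> i > 0 \<Longrightarrow>
   f (u @ [i] @ x) = S (f (u @ [-i] @ x)) (f (u @ x))"
  unfolding skein_compatible_def by blast

lemma skein_compatible_neg:
  "skein_compatible n S S' f \<Longrightarrow> braid_word n (u @ x) \<Longrightarrow> braid_word n [i] \<Longrightarrow> i > 0 \<Longrightarrow>
   f (u @ [-i] @ x) = S' (f (u @ [i] @ x)) (f (u @ x))"
  unfolding skein_compatible_def by blast

lemma skein_compatible_context:
  assumes "skein_compatible (Suc N) S S' f" "braid_word (Suc N) p" "braid_word (Suc N) q"
  shows "skein_compatible N S S' (\<lambda>w. f (p @ w @ q))"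
  unfolding skein_compatible_def
proof (intro conjI allI impI)
  fix w w' assume "braid_equiv N w w'"
  then have "braid_equiv (Suc N) w w'" by (rule braid_equiv_mono) simp
  then show "f (p @ w @ q) = f (p @ w' @ q)"
    using assms by (intro skein_compatible_equiv[OF assms(1)] braid_equiv_context)
next
  fix u x i assume uxi: "braid_word N (u @ x) \<and> braid_word N [i] \<and> 0 < i"
  then have ux: "braid_word (Suc N) ((p @ u) @ (x @ q))" and i: "braid_word (Suc N) [i]"
    using assms braid_word_Suc by auto
  show "f (p @ (u @ [i] @ x) @ q) = S (f (p @ (u @ [- i] @ x) @ q)) (f (p @ (u @ x) @ q))"
    using skein_compatible_pos[OF assms(1) ux i] uxi by simp
  show "f (p @ (u @ [- i] @ x) @ q) = S' (f (p @ (u @ [i] @ x) @ q)) (f (p @ (u @ x) @ q))"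
    using skein_compatible_neg[OF assms(1) ux i] uxi by simp
qed

text \<open>The data from which a skein compatible function on \<open>B\<^sub>n\<^sub>+\<^sub>1\<close> is reconstructed.\<close>
definition agree_on_lower_braids :: "nat \<Rightarrow> (int list \<Rightarrow> 'b) \<Rightarrow> (int list \<Rightarrow> 'b) \<Rightarrow> bool" where
  "agree_on_lower_braids n f g \<longleftrightarrow>
     (\<forall>a. braid_word n a \<longrightarrow> f a = g a) \<and>
     (\<forall>a b. 1 \<le> n \<longrightarrow> braid_word n a \<longrightarrow> braid_word n b \<longrightarrow> f (a @ [int n] @ b) = g (a @ [int n] @ b))"

lemma agree_on_lower_braidsD:
  "agree_on_lower_braids n f g \<Longrightarrow> braid_word n a \<Longrightarrow> f a = g a"
  "agree_on_lower_braids n f g \<Longrightarrow> 1 \<le> n \<Longrightarrow> braid_word n a \<Longrightarrow> braid_word n b \<Longrightarrow>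
     f (a @ [int n] @ b) = g (a @ [int n] @ b)"
  unfolding agree_on_lower_braids_def by blast+

lemma skein_compatible_double_top_crossing:
  assumes "skein_compatible (Suc N) S S' F" "N \<ge> 1"
    "braid_word (N - 1) c" "braid_word (Suc N) a" "braid_word (Suc N) \<beta>"
  shows "F (a @ [int N] @ c @ [int N] @ \<beta>) = S (F (a @ c @ \<beta>)) (F (a @ c @ [int N] @ \<beta>))"
proof -
  have c: "braid_word (Suc N) c" and top: "braid_word (Suc N) [int N]"
    using assms braid_word_mono[of "N - 1" c "Suc N"] by auto
  have "F (a @ [int N] @ c @ [int N] @ \<beta>) = F ((a @ c) @ [int N] @ ([int N] @ \<beta>))"
    using skein_compatible_equiv[OF assms(1) braid_equiv_top_commute[OF assms(3)]] assms c top by simp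
  also have "\<dots> = S (F ((a @ c) @ [- int N] @ ([int N] @ \<beta>))) (F ((a @ c) @ [int N] @ \<beta>))"
    using skein_compatible_pos[OF assms(1), of "a @ c" "[int N] @ \<beta>" "int N"] assms c top by simp
  moreover have "F ((a @ c) @ [- int N, - (- int N)] @ \<beta>) = F ((a @ c) @ \<beta>)"
    using assms c top by (intro skein_compatible_equiv[OF assms(1)] braid_equiv.cancel) auto
  ultimately show ?thesis by simp
qed

lemma braid_equiv_top_crossings_braid_rel:
  assumes "N \<ge> 2" "braid_word (N - 1) c" "braid_word (N - 1) d" "braid_word (Suc N) a" "braid_word (Suc N) \<beta>"
  shows "braid_equiv (Suc N) (a @ [int N] @ (c @ [int N - 1] @ d) @ [int N] @ \<beta>)
                             ((a @ c @ [int N - 1]) @ [int N] @ ([int N - 1] @ d) @ \<beta>)"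
proof -
  have cd: "braid_word (Suc N) c" "braid_word (Suc N) d"
    using assms braid_word_mono[of "N - 1" _ "Suc N"] by auto
  have "braid_equiv (Suc N) (a @ [int N] @ c @ ([int N - 1] @ d @ [int N] @ \<beta>))
                            (a @ c @ [int N] @ ([int N - 1] @ d @ [int N] @ \<beta>))"
    using assms cd by (intro braid_equiv_top_commute) auto
  also have "braid_equiv (Suc N) \<dots> ((a @ c @ [int N, int N - 1]) @ [int N] @ d @ \<beta>)"
    using assms cd braid_equiv.sym[OF braid_equiv_top_commute[OF assms(3),
          of "a @ c @ [int N, int N - 1]" \<beta>]] by simp
  also have "braid_equiv (Suc N) \<dots> ((a @ c) @ [int N - 1, int N - 1 + 1, int N - 1] @ (d @ \<beta>))"
    using assms cd braid_equiv.sym[OF braid_equiv.braid_rel[of "Suc N" "a @ c" "d @ \<beta>" "int N - 1"]]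
    by simp
  finally show ?thesis by simp
qed

definition skein_determined :: "nat \<Rightarrow> ('b \<Rightarrow> 'b \<Rightarrow> 'b) \<Rightarrow> ('b \<Rightarrow> 'b \<Rightarrow> 'b) \<Rightarrow> bool" where
  "skein_determined n S S' \<longleftrightarrow>
     (\<forall>f g. skein_compatible n S S' f \<and> skein_compatible n S S' g \<and> agree_on_lower_braids (n - 1) f g \<longrightarrow>
        (\<forall>\<beta>. braid_word n \<beta> \<longrightarrow> f \<beta> = g \<beta>))"

lemma agree_double_top_crossing:
  assumes uniq: "skein_determined N S S'"
    and f: "skein_compatible (Suc N) S S' f" and g: "skein_compatible (Suc N) S S' g"
    and N: "N \<ge> 1" and \<beta>: "braid_word (Suc N) \<beta>"
    and agree: "agree_on_lower_braids N (\<lambda>w. f (w @ \<beta>)) (\<lambda>w. g (w @ \<beta>))"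
    and a: "braid_word N a" and b: "braid_word N b"
  shows "f (a @ [int N] @ b @ [int N] @ \<beta>) = g (a @ [int N] @ b @ [int N] @ \<beta>)"
proof -
  \<comment> \<open>As functions of the middle word \<open>b\<close> both sides are skein compatible on \<open>B\<^sub>N\<close>,
    so uniqueness one level down applies.\<close>
  let ?p = "a @ [int N]" and ?q = "[int N] @ \<beta>"
  have pq: "braid_word (Suc N) ?p" "braid_word (Suc N) ?q"
    using a \<beta> N braid_word_Suc by auto
  have aS: "braid_word (Suc N) a" using a braid_word_Suc by blast
  have "agree_on_lower_braids (N - 1) (\<lambda>w. f (?p @ w @ ?q)) (\<lambda>w. g (?p @ w @ ?q))"
    unfolding agree_on_lower_braids_def
  proof (intro conjI allI impI)
    fix c assume c: "braid_word (N - 1) c"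
    have split: "F (?p @ c @ ?q) = S (F ((a @ c) @ \<beta>)) (F ((a @ c) @ [int N] @ [] @ \<beta>))"
      if "skein_compatible (Suc N) S S' F" for F
      using skein_compatible_double_top_crossing[OF that N c aS \<beta>] by simp
    have ac: "braid_word N (a @ c)"
      using a c braid_word_mono[of "N - 1" c N] by simp
    show "f (?p @ c @ ?q) = g (?p @ c @ ?q)"
      using split[OF f] split[OF g] agree_on_lower_braidsD(1)[OF agree ac]
        agree_on_lower_braidsD(2)[OF agree N ac braid_word_Nil] by simp
  next
    fix c d assume cd: "1 \<le> N - 1" "braid_word (N - 1) c" "braid_word (N - 1) d"
    then have top: "int (N - 1) = int N - 1" by simp
    have moved: "F (?p @ (c @ [int N - 1] @ d) @ ?q) =
        F ((a @ c @ [int N - 1]) @ [int N] @ ([int N - 1] @ d) @ \<beta>)"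
      if "skein_compatible (Suc N) S S' F" for F
      using skein_compatible_equiv[OF that braid_equiv_top_crossings_braid_rel[OF _ cd(2,3) aS \<beta>]] cd
      by simp
    have "braid_word N (a @ c @ [int N - 1])" "braid_word N ([int N - 1] @ d)"
      using cd a braid_word_mono[of "N - 1" _ N] by auto
    from agree_on_lower_braidsD(2)[OF agree N this]
    show "f (?p @ (c @ [int (N - 1)] @ d) @ ?q) = g (?p @ (c @ [int (N - 1)] @ d) @ ?q)"
      unfolding top using moved[OF f] moved[OF g] by simp
  qed
  then have "(\<lambda>w. f (?p @ w @ ?q)) b = (\<lambda>w. g (?p @ w @ ?q)) b"
    using skein_compatible_context[OF f pq] skein_compatible_context[OF g pq] b
    by (intro uniq[unfolded skein_determined_def, rule_format]) simp_all
  then show ?thesis by simp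
qed

lemma agree_on_lower_braids_Cons_at:
  assumes uniq: "skein_determined N S S'"
    and f: "skein_compatible (Suc N) S S' f" and g: "skein_compatible (Suc N) S S' g"
    and N: "N \<ge> 1" and h\<beta>: "braid_word (Suc N) (h # \<beta>)"
    and agree: "agree_on_lower_braids N (\<lambda>w. f (w @ \<beta>)) (\<lambda>w. g (w @ \<beta>))"
    and a: "braid_word N a" and b: "braid_word N b"
  shows "f (a @ h # \<beta>) = g (a @ h # \<beta>) \<and> f (a @ [int N] @ b @ h # \<beta>) = g (a @ [int N] @ b @ h # \<beta>)"
proof -
  have \<beta>: "braid_word (Suc N) \<beta>" and top: "braid_word (Suc N) [int N]" using h\<beta> N by auto
  have aS: "braid_word (Suc N) a" and bS: "braid_word (Suc N) b" using a b braid_word_Suc by auto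
  note agree0 = agree_on_lower_braidsD(1)[OF agree]
    and agree1 = agree_on_lower_braidsD(2)[OF agree N]
    and twice = agree_double_top_crossing[OF uniq f g N \<beta> agree a b]
  consider "\<bar>h\<bar> < int N" | "h = int N" | "h = - int N" using h\<beta> by fastforce
  then show ?thesis
  proof cases
    case 1
    then have "braid_word N [h]" using h\<beta> by auto
    then show ?thesis using agree0[of "a @ [h]"] agree1[of a "b @ [h]"] a b by simp
  next
    case 2
    then show ?thesis using agree1[of a "[]"] twice a by simp
  next
    case 3
    have "f (a @ [- int N] @ \<beta>) = g (a @ [- int N] @ \<beta>)"
      using skein_compatible_neg[OF f, of a \<beta> "int N"] skein_compatible_neg[OF g, of a \<beta> "int N"]
        agree0[OF a] agree1[of a "[]"] a aS \<beta> top N by simp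
    moreover have "f ((a @ [int N] @ b) @ [- int N] @ \<beta>) = g ((a @ [int N] @ b) @ [- int N] @ \<beta>)"
      using skein_compatible_neg[OF f, of "a @ [int N] @ b" \<beta> "int N"]
        skein_compatible_neg[OF g, of "a @ [int N] @ b" \<beta> "int N"]
        agree1[OF a b] twice aS bS \<beta> top N by simp
    ultimately show ?thesis using 3 by simp
  qed
qed

lemma agree_on_lower_braids_Cons:
  assumes "skein_determined N S S'"
    and "skein_compatible (Suc N) S S' f" "skein_compatible (Suc N) S S' g"
    and "N \<ge> 1" "braid_word (Suc N) (h # \<beta>)"
    and "agree_on_lower_braids N (\<lambda>w. f (w @ \<beta>)) (\<lambda>w. g (w @ \<beta>))"
  shows "agree_on_lower_braids N (\<lambda>w. f (w @ h # \<beta>)) (\<lambda>w. g (w @ h # \<beta>))"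
  unfolding agree_on_lower_braids_def
proof (intro conjI allI impI)
  fix a assume "braid_word N a"
  then show "f (a @ h # \<beta>) = g (a @ h # \<beta>)"
    using agree_on_lower_braids_Cons_at[OF assms _ braid_word_Nil] by simp
next
  fix a b assume "braid_word N a" "braid_word N b"
  then show "f ((a @ [int N] @ b) @ h # \<beta>) = g ((a @ [int N] @ b) @ h # \<beta>)"
    using agree_on_lower_braids_Cons_at[OF assms] by simp
qed

theorem skein_determined: "skein_determined (Suc n) S S'"
proof (induction n)
  case 0
  then show ?case
    by (simp add: skein_determined_def braid_word_Suc_0_iff agree_on_lower_braids_def)
next
  case (Suc N)
  show ?case unfolding skein_determined_def
  proof (intro allI impI, elim conjE)
    fix f g \<beta> assume f: "skein_compatible (Suc (Suc N)) S S' f" and g: "skein_compatible (Suc (Suc N)) S S' g"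
      and lower: "agree_on_lower_braids (Suc (Suc N) - 1) f g" and \<beta>: "braid_word (Suc (Suc N)) \<beta>"
    have "agree_on_lower_braids (Suc N) (\<lambda>w. f (w @ \<gamma>)) (\<lambda>w. g (w @ \<gamma>))"
      if "braid_word (Suc (Suc N)) \<gamma>" for \<gamma>
      using that
    proof (induction \<gamma>)
      case Nil
      then show ?case using lower by simp
    next
      case (Cons h \<gamma>)
      then have "braid_word (Suc (Suc N)) \<gamma>" by simp
      from agree_on_lower_braids_Cons[OF Suc.IH f g _ Cons.prems Cons.IH[OF this]] show ?case by simp
    qed
    from agree_on_lower_braidsD(1)[OF this[OF \<beta>], of "[]"] show "f \<beta> = g \<beta>" by simp
  qed
qed

corollary skein_compatible_unique:
  assumes "skein_compatible (Suc n) S S' f" "skein_compatible (Suc n) S S' g"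
    "agree_on_lower_braids n f g" "braid_word (Suc n) \<beta>"
  shows "f \<beta> = g \<beta>"
  using skein_determined[of n S S'] assms unfolding skein_determined_def by simp

section \<open>Half twists\<close>

text \<open>\<open>descending m n\<close> is \<open>\<sigma>\<^sub>n \<sigma>\<^sub>n\<^sub>-\<^sub>1 \<cdots> \<sigma>\<^sub>m\<close>, and \<open>loop_word n = \<sigma>\<^sub>n \<cdots> \<sigma>\<^sub>1 \<sigma>\<^sub>1 \<cdots> \<sigma>\<^sub>n\<close>
  is the pure braid in which the last strand of \<open>B\<^sub>n\<^sub>+\<^sub>1\<close> encircles all the others.\<close>
definition descending :: "nat \<Rightarrow> nat \<Rightarrow> int list" where
  "descending m n = rev (map int [m..<Suc n])"

definition loop_word :: "nat \<Rightarrow> int list" where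
  "loop_word n = descending 1 n @ rev (descending 1 n)"

lemma set_descending: "set (descending m n) = int ` {m..n}"
  by (auto simp: descending_def)

lemma descending_eq_snoc: "m \<le> n \<Longrightarrow> descending m n = descending (Suc m) n @ [int m]"
  by (simp add: descending_def upt_conv_Cons)

lemma descending_split: "m \<le> Suc k \<Longrightarrow> k \<le> n \<Longrightarrow> descending m n = descending (Suc k) n @ descending m k"
  using upt_add_eq_append[of m "Suc k" "n - k"] by (simp add: descending_def)

lemma descending_Suc_self: "descending (Suc n) n = []"
  by (simp add: descending_def)

lemma descending_1_Suc: "descending (Suc 0) (Suc n) = int (Suc n) # descending (Suc 0) n"
  by (simp add: descending_def)

lemma descending_1_0: "descending (Suc 0) 0 = []"
  by (simp add: descending_def)

lemma braid_word_descending: "1 \<le> m \<Longrightarrow> n < N \<Longrightarrow> braid_word N (descending m n)"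
  by (auto simp: braid_word_def set_descending)

lemma exp_sum_descending_1: "exp_sum (descending (Suc 0) n) = int n"
  by (induction n) (simp_all add: descending_def)

lemma garside_Suc: "garside (Suc n) = garside n @ descending 1 n"
  by (cases n) (simp_all add: descending_def)

lemma set_garside: "g \<in> set (garside n) \<Longrightarrow> 1 \<le> g \<and> g \<le> int n - 1"
  by (induction n) (auto simp: garside_Suc set_descending)

lemma braid_word_garside: "braid_word n (garside n)"
  using set_garside by (force simp: braid_word_def)

lemma exp_sum_garside: "2 * exp_sum (garside n) = int n * (int n - 1)"
  by (induction n) (simp_all add: garside_Suc exp_sum_descending_1 algebra_simps)

lemma loop_word_eq: "1 \<le> n \<Longrightarrow> loop_word n = [int n] @ loop_word (n - 1) @ [int n]"
  by (cases n) (simp_all add: loop_word_def descending_1_Suc)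

lemma braid_word_loop_word: "braid_word (Suc n) (loop_word n)"
  by (auto simp: loop_word_def braid_word_def set_descending)

lemma garside_descending_commute:
  "braid_equiv (Suc n) (garside n @ descending 1 n) (rev (descending 1 n) @ garside n)"
proof (induction n)
  case 0
  then show ?case by (simp add: descending_1_0 braid_equiv.refl)
next
  case (Suc n)
  let ?G = "garside n" and ?D = "descending 1 n" and ?N = "Suc (Suc n)"
  have words: "braid_word ?N ?G" "braid_word ?N ?D"
    using braid_word_mono[OF braid_word_garside, of n ?N] braid_word_descending[of 1 n ?N] by auto
  have "braid_equiv ?N ((?G @ ?D) @ [int (Suc n)] @ ?D) ((rev ?D @ ?G) @ [int (Suc n)] @ ?D)"
    using words by (intro braid_equiv_append_right braid_equiv_mono[OF Suc.IH]) auto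
  also have "braid_equiv ?N \<dots> (rev ?D @ [int (Suc n)] @ ?G @ ?D)"
  proof -
    have "\<forall>g\<in>set ?G. 2 \<le> \<bar>\<bar>g\<bar> - \<bar>int (Suc n)\<bar>\<bar>" using set_garside[of _ n] by fastforce
    from braid_equiv.sym[OF braid_equiv_commute_far[OF this, of ?N "rev ?D" ?D]] show ?thesis
      using words by simp
  qed
  finally show ?case by (simp add: garside_Suc descending_1_Suc)
qed

lemma loop_word_commute_generator:
  assumes k: "1 \<le> k" "k + 1 \<le> n"
  shows "braid_equiv (Suc n) ([int k] @ loop_word n) (loop_word n @ [int k])"
proof -
  let ?P = "descending (k + 2) n" and ?Q = "descending 1 (k - 1)" and ?N = "Suc n"
  have "descending 1 n = ?P @ [int k + 1, int k] @ ?Q"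
    using k descending_split[of 1 "k + 1" n] descending_split[of 1 "k - 1" "k + 1"]
    by (simp add: descending_def upt_conv_Cons)
  then have loop: "loop_word n = ?P @ [int k + 1, int k] @ ?Q @ rev ?Q @ [int k, int k + 1] @ rev ?P"
    by (simp add: loop_word_def)
  have words: "braid_word ?N ?P" "braid_word ?N ?Q" "braid_word ?N [int k]" "braid_word ?N [int k + 1]"
    using k by (auto simp: braid_word_def set_descending)
  have far_P: "\<forall>g\<in>set ?P. 2 \<le> \<bar>\<bar>g\<bar> - \<bar>int k\<bar>\<bar>" "\<forall>g\<in>set (rev ?P). 2 \<le> \<bar>\<bar>g\<bar> - \<bar>int k\<bar>\<bar>"
    by (auto simp: set_descending)
  have far_Q: "\<forall>g\<in>set (?Q @ rev ?Q). 2 \<le> \<bar>\<bar>g\<bar> - \<bar>int k + 1\<bar>\<bar>"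
    by (auto simp: set_descending)
  have "braid_equiv ?N ([int k] @ loop_word n)
      (?P @ [int k, int k + 1, int k] @ ?Q @ rev ?Q @ [int k, int k + 1] @ rev ?P)"
    unfolding loop using words braid_equiv_commute_far[OF far_P(1), of ?N "[]"] by simp
  also have "braid_equiv ?N \<dots> (?P @ [int k + 1, int k, int k + 1] @ ?Q @ rev ?Q @ [int k, int k + 1] @ rev ?P)"
    using words k braid_equiv.braid_rel[of ?N ?P "?Q @ rev ?Q @ [int k, int k + 1] @ rev ?P" "int k"] by simp
  also have "braid_equiv ?N \<dots> (?P @ [int k + 1, int k] @ ?Q @ rev ?Q @ [int k + 1, int k, int k + 1] @ rev ?P)"
    using words braid_equiv_commute_far[OF far_Q, of ?N "?P @ [int k + 1, int k]"] by simp
  also have "braid_equiv ?N \<dots> (?P @ [int k + 1, int k] @ ?Q @ rev ?Q @ [int k, int k + 1, int k] @ rev ?P)"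
    using words k braid_equiv.sym[OF braid_equiv.braid_rel[of ?N "?P @ [int k + 1, int k] @ ?Q @ rev ?Q"
        "rev ?P" "int k"]] by simp
  also have "braid_equiv ?N \<dots> (loop_word n @ [int k])"
    unfolding loop using words braid_equiv_commute_far[OF far_P(2),
        of ?N "?P @ [int k + 1, int k] @ ?Q @ rev ?Q @ [int k, int k + 1]" "[]"] by simp
  finally show ?thesis .
qed

lemma loop_word_commute_letter:
  assumes "braid_word n [h]"
  shows "braid_equiv (Suc n) ([h] @ loop_word n) (loop_word n @ [h])"
proof (cases "h > 0")
  case True
  with assms show ?thesis using loop_word_commute_generator[of "nat h" n] by simp
next
  case False
  define k where "k = nat (- h)"
  have k: "h = - int k" "1 \<le> k" "k + 1 \<le> n" using assms False by (auto simp: k_def)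
  have words: "braid_word (Suc n) [int k]" "braid_word (Suc n) (loop_word n)"
    using k braid_word_loop_word by auto
  have "braid_equiv (Suc n) ([- int k] @ loop_word n) (([- int k] @ loop_word n) @ [int k, - int k])"
    using words braid_equiv.cancel[of "Suc n" "[- int k] @ loop_word n" "[]" "int k"] k
    by (auto intro: braid_equiv.sym)
  also have "braid_equiv (Suc n) \<dots> ([- int k] @ ([int k] @ loop_word n) @ [- int k])"
    using words k braid_equiv_context[OF braid_equiv.sym[OF loop_word_commute_generator[OF k(2,3)]],
        of "[- int k]" "[- int k]"] by simp
  also have "braid_equiv (Suc n) \<dots> (loop_word n @ [- int k])"
    using words k braid_equiv.cancel[of "Suc n" "[]" "loop_word n @ [- int k]" "- int k"] by simp
  finally show ?thesis using k by simp
qed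

lemma loop_word_central:
  assumes "braid_word n c"
  shows "braid_equiv (Suc n) (c @ loop_word n) (loop_word n @ c)"
  using assms
proof (induction c)
  case Nil
  then show ?case using braid_word_loop_word by (simp add: braid_equiv.refl)
next
  case (Cons h c)
  then have h: "braid_word n [h]" and c: "braid_word (Suc n) c" using braid_word_Suc by auto
  have "braid_equiv (Suc n) ([h] @ c @ loop_word n) ([h] @ loop_word n @ c)"
    using Cons h by (intro braid_equiv_append_left) auto
  also have "braid_equiv (Suc n) \<dots> (loop_word n @ [h] @ c)"
    using braid_equiv_append_right[OF loop_word_commute_letter[OF h] c] by simp
  finally show ?case by simp
qed

lemma garside_square_Suc:
  "braid_equiv (Suc n) (garside (Suc n) @ garside (Suc n)) (garside n @ garside n @ loop_word n)"
proof -
  let ?G = "garside n" and ?D = "descending 1 n"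
  have words: "braid_word (Suc n) ?G" "braid_word (Suc n) ?D"
    using braid_word_Suc[OF braid_word_garside] braid_word_descending[of 1 n] by auto
  have "braid_equiv (Suc n) ((?G @ ?D) @ (?G @ ?D) @ []) ((?G @ ?D) @ (rev ?D @ ?G) @ [])"
    using words by (intro braid_equiv_context[OF garside_descending_commute]) auto
  also have "braid_equiv (Suc n) \<dots> (?G @ (?G @ loop_word n) @ [])"
    using words braid_equiv.sym[OF braid_equiv_context[OF loop_word_central[OF braid_word_garside],
        where u = ?G and x = "[]"]] by (simp add: loop_word_def)
  finally show ?thesis by (simp add: garside_Suc)
qed

lemma braid_equiv_single_top_crossing:
  assumes "1 \<le> m" "m \<le> n"
  shows "\<exists>A B. braid_word n A \<and> braid_word n B \<and>
     braid_equiv (Suc n) (descending (Suc m) n @ [int m] @ rev (descending (Suc m) n)) (A @ [int n] @ B)"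
  using assms
proof (induction "n - m" arbitrary: m)
  case 0
  then have "m = n" "1 \<le> n" by simp_all
  then show ?case by (intro exI[of _ "[]"]) (simp add: descending_Suc_self braid_equiv.refl)
next
  case (Suc k)
  let ?V = "descending (Suc (Suc m)) n" and ?N = "Suc n"
  have "k = n - Suc m" "1 \<le> Suc m" "Suc m \<le> n" using Suc.prems Suc.hyps(2) by arith+
  then obtain A B where AB: "braid_word n A" "braid_word n B"
    "braid_equiv ?N (?V @ [int (Suc m)] @ rev ?V) (A @ [int n] @ B)"
    using Suc.hyps(1) by blast
  have V: "descending (Suc m) n = ?V @ [int m + 1]"
    using Suc descending_eq_snoc[of "Suc m" n] by simp
  have words: "braid_word ?N ?V" "braid_word ?N [int m]" "braid_word ?N [int m + 1]"
    using Suc by (auto simp: braid_word_def set_descending)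
  have far: "\<forall>g\<in>set ?V. 2 \<le> \<bar>\<bar>g\<bar> - \<bar>int m\<bar>\<bar>" "\<forall>g\<in>set (rev ?V). 2 \<le> \<bar>\<bar>g\<bar> - \<bar>int m\<bar>\<bar>"
    using Suc by (auto simp: set_descending)
  have "braid_equiv ?N (descending (Suc m) n @ [int m] @ rev (descending (Suc m) n))
      (?V @ [int m, int m + 1, int m] @ rev ?V)"
    unfolding V using words Suc braid_equiv.sym[OF braid_equiv.braid_rel[of ?N ?V "rev ?V" "int m"]] by simp
  also have "braid_equiv ?N \<dots> ([int m] @ ?V @ [int m + 1, int m] @ rev ?V)"
    using words braid_equiv.sym[OF braid_equiv_commute_far[OF far(1), of ?N "[]"]] by simp
  also have "braid_equiv ?N \<dots> ([int m] @ (?V @ [int (Suc m)] @ rev ?V) @ [int m])"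
    using words braid_equiv_commute_far[OF far(2), of ?N "[int m] @ ?V @ [int m + 1]" "[]"]
    by (simp add: add.commute)
  also have "braid_equiv ?N \<dots> ([int m] @ (A @ [int n] @ B) @ [int m])"
    using words by (intro braid_equiv_context[OF AB(3)]) auto
  finally have "braid_equiv ?N (descending (Suc m) n @ [int m] @ rev (descending (Suc m) n))
      (([int m] @ A) @ [int n] @ (B @ [int m]))" by simp
  moreover have "braid_word n ([int m] @ A)" "braid_word n (B @ [int m])" using AB Suc by auto
  ultimately show ?case by blast
qed

section \<open>The Homfly polynomial and the Morton--Franks--Williams inequality\<close>

definition skein_coeff2 :: "(int \<Rightarrow> int \<Rightarrow> int) \<Rightarrow> (int \<Rightarrow> int \<Rightarrow> int) \<Rightarrow> int \<Rightarrow> int \<Rightarrow> int" where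
  "skein_coeff2 p q = (\<lambda>a b. p (a - 2) b + q (a - 1) (b - 1))"

definition skein_coeff2_neg :: "(int \<Rightarrow> int \<Rightarrow> int) \<Rightarrow> (int \<Rightarrow> int \<Rightarrow> int) \<Rightarrow> int \<Rightarrow> int \<Rightarrow> int" where
  "skein_coeff2_neg p q = (\<lambda>a b. p (a + 2) b - q (a + 1) (b - 1))"

locale homfly =
  fixes P :: "nat \<Rightarrow> int list \<Rightarrow> laurent2"
  assumes homfly: "is_homfly P"
begin

lemma P_unknot: "P 1 [] = 1"
  using homfly unfolding is_homfly_def by (elim conjE)

lemma P_cancel: "braid_word n (u @ x) \<Longrightarrow> braid_word n [i] \<Longrightarrow> P n (u @ [i, -i] @ x) = P n (u @ x)"
  using homfly unfolding is_homfly_def by metis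

lemma P_far_comm: "braid_word n (u @ x) \<Longrightarrow> braid_word n [i, j] \<Longrightarrow> \<bar>\<bar>i\<bar> - \<bar>j\<bar>\<bar> \<ge> 2 \<Longrightarrow>
    P n (u @ [i, j] @ x) = P n (u @ [j, i] @ x)"
  using homfly unfolding is_homfly_def by blast

lemma P_braid_rel: "braid_word n (u @ x) \<Longrightarrow> i \<ge> 1 \<Longrightarrow> i + 1 \<le> int n - 1 \<Longrightarrow>
    P n (u @ [i, i + 1, i] @ x) = P n (u @ [i + 1, i, i + 1] @ x)"
  using homfly unfolding is_homfly_def by blast

lemma P_conj: "braid_word n (u @ x) \<Longrightarrow> P n (u @ x) = P n (x @ u)"
  using homfly unfolding is_homfly_def by blast

lemma P_stabilise_pos: "n \<ge> 1 \<Longrightarrow> braid_word n u \<Longrightarrow> P (Suc n) (u @ [int n]) = P n u"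
  using homfly unfolding is_homfly_def by blast

lemma P_stabilise_neg: "n \<ge> 1 \<Longrightarrow> braid_word n u \<Longrightarrow> P (Suc n) (u @ [- int n]) = P n u"
  using homfly unfolding is_homfly_def by blast

lemma P_skein: "braid_word n (u @ x) \<Longrightarrow> braid_word n [i] \<Longrightarrow> i > 0 \<Longrightarrow>
    P n (u @ [i] @ x) = mono 2 0 * P n (u @ [-i] @ x) + mono 1 1 * P n (u @ x)"
  using homfly unfolding is_homfly_def by blast

lemma P_braid_equiv: "braid_equiv n w w' \<Longrightarrow> P n w = P n w'"
proof (induction rule: braid_equiv.induct)
  case (cancel u x i)
  then show ?case by (rule P_cancel)
next
  case (far_comm u x i j)
  then show ?case by (rule P_far_comm)
next
  case (braid_rel u x i)
  then show ?case by (rule P_braid_rel)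
qed simp_all

lemma P_skein_neg:
  assumes "braid_word n (u @ x)" "braid_word n [i]" "i > 0"
  shows "P n (u @ [-i] @ x) = mono (-2) 0 * P n (u @ [i] @ x) - mono (-1) 1 * P n (u @ x)"
proof -
  have "mono (-2) 0 * P n (u @ [i] @ x)
      = (mono (-2) 0 * mono 2 0) * P n (u @ [-i] @ x) + (mono (-2) 0 * mono 1 1) * P n (u @ x)"
    unfolding P_skein[OF assms] by (simp add: algebra_simps)
  also have "\<dots> = P n (u @ [-i] @ x) + mono (-1) 1 * P n (u @ x)"
    by (simp add: mono_mult mono_0_0)
  finally show ?thesis by simp
qed

lemma coeff2_P_skein:
  assumes "braid_word n (u @ x)" "braid_word n [i]" "i > 0"
  shows "coeff2 (P n (u @ [i] @ x)) a b =
    coeff2 (P n (u @ [-i] @ x)) (a - 2) b + coeff2 (P n (u @ x)) (a - 1) (b - 1)"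
  using P_skein[OF assms] by (simp add: coeff2_add coeff2_mono_mult)

lemma coeff2_P_skein_neg:
  assumes "braid_word n (u @ x)" "braid_word n [i]" "i > 0"
  shows "coeff2 (P n (u @ [-i] @ x)) a b =
    coeff2 (P n (u @ [i] @ x)) (a + 2) b - coeff2 (P n (u @ x)) (a + 1) (b - 1)"
  using P_skein_neg[OF assms] by (simp add: coeff2_diff coeff2_mono_mult)

text \<open>Adding a strand that is not braided with the others is a split union with an unknot;
  the skein relation at \<open>\<sigma>\<^sub>n\<^sup>\<plusminus>\<^sup>1\<close> together with both Markov moves gives its factor
  \<open>(v\<^sup>-\<^sup>1 - v) z\<^sup>-\<^sup>1\<close>.\<close>
lemma P_split_unknot:
  assumes "n \<ge> 1" "braid_word n a"
  shows "P (Suc n) a = mono (-1) (-1) * (P n a - mono 2 0 * P n a)"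
proof -
  have "braid_word (Suc n) (a @ [])" "braid_word (Suc n) [int n]" "int n > 0"
    using assms braid_word_Suc by auto
  from P_skein[OF this] have "P n a = mono 2 0 * P n a + mono 1 1 * P (Suc n) a"
    using P_stabilise_pos[OF assms] P_stabilise_neg[OF assms] by simp
  then have "P n a - mono 2 0 * P n a = mono 1 1 * P (Suc n) a"
    by (metis add_diff_cancel_left')
  then have "mono (-1) (-1) * (P n a - mono 2 0 * P n a) = (mono (-1) (-1) * mono 1 1) * P (Suc n) a"
    by (simp add: mult.assoc)
  then show ?thesis by (simp add: mono_mult mono_0_0)
qed

lemma coeff2_P_split_unknot:
  assumes "n \<ge> 1" "braid_word n a"
  shows "coeff2 (P (Suc n) a) A B = coeff2 (P n a) (A + 1) (B + 1) - coeff2 (P n a) (A - 1) (B + 1)"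
  using P_split_unknot[OF assms] by (simp add: coeff2_diff coeff2_mono_mult)

lemma P_markov:
  assumes "n \<ge> 1" "braid_word n a" "braid_word n b"
  shows "P (Suc n) (a @ [int n] @ b) = P n (b @ a)"
proof -
  have "P (Suc n) (a @ [int n] @ b) = P (Suc n) ((b @ a) @ [int n])"
    using assms braid_word_Suc P_conj[of "Suc n" a "[int n] @ b"] P_conj[of "Suc n" "[int n]" "b @ a"]
    by auto
  also have "\<dots> = P n (b @ a)" using P_stabilise_pos[of n "b @ a"] assms by simp
  finally show ?thesis .
qed

definition coeff_outside_mfw :: "nat \<Rightarrow> int list \<Rightarrow> int \<Rightarrow> int \<Rightarrow> int" where
  "coeff_outside_mfw n \<beta> = (\<lambda>a b.
     if a < exp_sum \<beta> - int n + 1 \<or> a > exp_sum \<beta> + int n - 1 then coeff2 (P n \<beta>) a b else 0)"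

lemma skein_compatible_coeff_outside_mfw:
  "skein_compatible n skein_coeff2 skein_coeff2_neg (coeff_outside_mfw n)"
  unfolding skein_compatible_def
proof (intro conjI allI impI)
  fix w w' assume "braid_equiv n w w'"
  then show "coeff_outside_mfw n w = coeff_outside_mfw n w'"
    unfolding coeff_outside_mfw_def using braid_equiv_exp_sum P_braid_equiv by metis
next
  fix u x i assume "braid_word n (u @ x) \<and> braid_word n [i] \<and> 0 < i"
  then show "coeff_outside_mfw n (u @ [i] @ x) =
      skein_coeff2 (coeff_outside_mfw n (u @ [- i] @ x)) (coeff_outside_mfw n (u @ x))"
    and "coeff_outside_mfw n (u @ [- i] @ x) =
      skein_coeff2_neg (coeff_outside_mfw n (u @ [i] @ x)) (coeff_outside_mfw n (u @ x))"
    unfolding coeff_outside_mfw_def skein_coeff2_def skein_coeff2_neg_def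
    using coeff2_P_skein[of n u x i] coeff2_P_skein_neg[of n u x i] by (auto simp: fun_eq_iff)
qed

lemma coeff_outside_mfw_eq_0: "n \<ge> 1 \<Longrightarrow> braid_word n \<beta> \<Longrightarrow> coeff_outside_mfw n \<beta> = (\<lambda>_ _. 0)"
proof (induction n arbitrary: \<beta> rule: nat_induct_at_least)
  case base
  then show ?case using P_unknot[unfolded One_nat_def] by (simp add: braid_word_Suc_0_iff coeff_outside_mfw_def fun_eq_iff coeff2_one)
next
  case (Suc n)
  have vanish: "coeff2 (P n w) A B = 0"
    if "braid_word n w" "A < exp_sum w - int n + 1 \<or> A > exp_sum w + int n - 1" for w A B
    using Suc.IH[OF that(1)] that(2) unfolding coeff_outside_mfw_def by (metis (no_types, lifting))
  have "agree_on_lower_braids n (coeff_outside_mfw (Suc n)) (\<lambda>_ _ _. 0)"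
    unfolding agree_on_lower_braids_def coeff_outside_mfw_def
    using coeff2_P_split_unknot[OF Suc.hyps] vanish P_markov[OF Suc.hyps] Suc.hyps
    by (auto simp: fun_eq_iff)
  moreover have "skein_compatible (Suc n) skein_coeff2 skein_coeff2_neg (\<lambda>_ _ _. 0)"
    unfolding skein_compatible_def skein_coeff2_def skein_coeff2_neg_def by simp
  ultimately show ?case
    using skein_compatible_unique skein_compatible_coeff_outside_mfw Suc.prems by blast
qed

theorem coeff2_P_eq_0_outside_mfw:
  assumes "n \<ge> 1" "braid_word n \<beta>" "A < exp_sum \<beta> - int n + 1 \<or> A > exp_sum \<beta> + int n - 1"
  shows "coeff2 (P n \<beta>) A B = 0"
  using coeff_outside_mfw_eq_0[OF assms(1,2)] assms(3) unfolding coeff_outside_mfw_def by metis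

end

section \<open>Extreme coefficients\<close>

definition skein_coeff :: "(int \<Rightarrow> int) \<Rightarrow> (int \<Rightarrow> int) \<Rightarrow> int \<Rightarrow> int" where
  "skein_coeff p q = (\<lambda>b. p b + q (b - 1))"

definition skein_coeff_neg :: "(int \<Rightarrow> int) \<Rightarrow> (int \<Rightarrow> int) \<Rightarrow> int \<Rightarrow> int" where
  "skein_coeff_neg p q = (\<lambda>b. p b - q (b - 1))"

context homfly
begin

definition low_coeff :: "nat \<Rightarrow> int list \<Rightarrow> int \<Rightarrow> int" where
  "low_coeff n \<beta> = (\<lambda>b. coeff2 (P n \<beta>) (exp_sum \<beta> - int n + 1) b)"

definition high_coeff :: "nat \<Rightarrow> int list \<Rightarrow> int \<Rightarrow> int" where
  "high_coeff n \<beta> = (\<lambda>b. coeff2 (P n \<beta>) (exp_sum \<beta> + int n - 1) b)"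

lemma skein_compatible_low_coeff: "skein_compatible n skein_coeff skein_coeff_neg (low_coeff n)"
  unfolding skein_compatible_def
proof (intro conjI allI impI)
  fix w w' assume "braid_equiv n w w'"
  then show "low_coeff n w = low_coeff n w'"
    unfolding low_coeff_def using braid_equiv_exp_sum P_braid_equiv by metis
next
  fix u x i assume uxi: "braid_word n (u @ x) \<and> braid_word n [i] \<and> 0 < i"
  then show "low_coeff n (u @ [i] @ x) = skein_coeff (low_coeff n (u @ [- i] @ x)) (low_coeff n (u @ x))"
    unfolding low_coeff_def skein_coeff_def using coeff2_P_skein[of n u x i]
    by (auto simp: fun_eq_iff algebra_simps)
  show "low_coeff n (u @ [- i] @ x) = skein_coeff_neg (low_coeff n (u @ [i] @ x)) (low_coeff n (u @ x))"
    unfolding low_coeff_def skein_coeff_neg_def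
    using coeff2_P_skein_neg[of n u x i "exp_sum u + exp_sum x - int n"] uxi
    by (auto simp: fun_eq_iff algebra_simps)
qed

lemma skein_compatible_high_coeff: "skein_compatible n skein_coeff skein_coeff_neg (high_coeff n)"
  unfolding skein_compatible_def
proof (intro conjI allI impI)
  fix w w' assume "braid_equiv n w w'"
  then show "high_coeff n w = high_coeff n w'"
    unfolding high_coeff_def using braid_equiv_exp_sum P_braid_equiv by metis
next
  fix u x i assume uxi: "braid_word n (u @ x) \<and> braid_word n [i] \<and> 0 < i"
  then show "high_coeff n (u @ [i] @ x) = skein_coeff (high_coeff n (u @ [- i] @ x)) (high_coeff n (u @ x))"
    unfolding high_coeff_def skein_coeff_def using coeff2_P_skein[of n u x i]
    by (auto simp: fun_eq_iff algebra_simps)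
  show "high_coeff n (u @ [- i] @ x) = skein_coeff_neg (high_coeff n (u @ [i] @ x)) (high_coeff n (u @ x))"
    unfolding high_coeff_def skein_coeff_neg_def
    using coeff2_P_skein_neg[of n u x i "exp_sum u + exp_sum x + int n - 2"] uxi
    by (auto simp: fun_eq_iff algebra_simps)
qed

lemmas high_coeff_braid_equiv = skein_compatible_equiv[OF skein_compatible_high_coeff]

lemma low_coeff_conj: "braid_word n (u @ x) \<Longrightarrow> low_coeff n (u @ x) = low_coeff n (x @ u)"
  unfolding low_coeff_def using P_conj[of n u x] by (simp add: ac_simps)

lemma high_coeff_conj: "braid_word n (u @ x) \<Longrightarrow> high_coeff n (u @ x) = high_coeff n (x @ u)"
  unfolding high_coeff_def using P_conj[of n u x] by (simp add: ac_simps)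

lemma low_coeff_markov:
  "n \<ge> 1 \<Longrightarrow> braid_word n a \<Longrightarrow> braid_word n b \<Longrightarrow> low_coeff (Suc n) (a @ [int n] @ b) = low_coeff n (b @ a)"
  unfolding low_coeff_def using P_markov[of n a b] by (auto simp: fun_eq_iff algebra_simps)

text \<open>After the Markov move the closure is that of a braid on \<open>n\<close> strands with exponent sum
  one less, whose Morton--Franks--Williams range ends two below the degree asked for.\<close>
lemma high_coeff_top_crossing_eq_0:
  "n \<ge> 1 \<Longrightarrow> braid_word n a \<Longrightarrow> braid_word n b \<Longrightarrow> high_coeff (Suc n) (a @ [int n] @ b) = (\<lambda>_. 0)"
  unfolding high_coeff_def using P_markov[of n a b] coeff2_P_eq_0_outside_mfw[of n "b @ a"]
  by (auto simp: fun_eq_iff)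

lemma low_coeff_split_unknot:
  "n \<ge> 1 \<Longrightarrow> braid_word n a \<Longrightarrow> low_coeff (Suc n) a = (\<lambda>b. low_coeff n a (b + 1))"
  unfolding low_coeff_def using coeff2_P_split_unknot[of n a] coeff2_P_eq_0_outside_mfw[of n a]
  by (auto simp: fun_eq_iff)

lemma high_coeff_split_unknot:
  "n \<ge> 1 \<Longrightarrow> braid_word n a \<Longrightarrow> high_coeff (Suc n) a = (\<lambda>b. - high_coeff n a (b + 1))"
  unfolding high_coeff_def using coeff2_P_split_unknot[of n a] coeff2_P_eq_0_outside_mfw[of n a]
  by (auto simp: fun_eq_iff)

lemma high_coeff_descending_conjugate_eq_0:
  assumes "1 \<le> n" "1 \<le> m" "m \<le> n" "braid_word n x"
  shows "high_coeff (Suc n) (x @ descending (Suc m) n @ [int m] @ rev (descending (Suc m) n)) = (\<lambda>_. 0)"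
proof -
  obtain A B where AB: "braid_word n A" "braid_word n B"
    "braid_equiv (Suc n) (descending (Suc m) n @ [int m] @ rev (descending (Suc m) n)) (A @ [int n] @ B)"
    using braid_equiv_single_top_crossing[OF assms(2,3)] by blast
  have "braid_equiv (Suc n) (x @ (descending (Suc m) n @ [int m] @ rev (descending (Suc m) n)) @ [])
      (x @ (A @ [int n] @ B) @ [])"
    using assms braid_word_Suc by (intro braid_equiv_context[OF AB(3)]) auto
  then have "high_coeff (Suc n) (x @ descending (Suc m) n @ [int m] @ rev (descending (Suc m) n))
      = high_coeff (Suc n) ((x @ A) @ [int n] @ B)"
    using high_coeff_braid_equiv by simp
  also have "\<dots> = (\<lambda>_. 0)" using high_coeff_top_crossing_eq_0[of n "x @ A" B] assms AB by simp
  finally show ?thesis .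
qed

lemma high_coeff_append_loop_word:
  assumes n: "n \<ge> 1" and x: "braid_word n x"
  shows "high_coeff (Suc n) (x @ loop_word n) = high_coeff (Suc n) x"
proof -
  have xS: "braid_word (Suc n) x" using x braid_word_Suc by blast
  let ?P = "\<lambda>m. high_coeff (Suc n) (x @ descending m n @ rev (descending m n)) = high_coeff (Suc n) x"
  have "?P 1"
  proof (rule inc_induct[of 1 "Suc n" ?P])
    show "?P (Suc n)" by (simp add: descending_Suc_self)
  next
    fix m assume m: "1 \<le> m" "m < Suc n" and IH: "?P (Suc m)"
    \<comment> \<open>The skein relation at the middle \<open>\<sigma>\<^sub>m \<sigma>\<^sub>m\<close>: one term is the word for \<open>m + 1\<close>,
      the other conjugates \<open>\<sigma>\<^sub>m\<close> into a word with a single \<open>\<sigma>\<^sub>n\<close> and vanishes.\<close>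
    let ?V = "descending (Suc m) n"
    have V: "descending m n = ?V @ [int m]" using m descending_eq_snoc by simp
    have words: "braid_word (Suc n) ?V" "braid_word (Suc n) [int m]"
      using m by (auto simp: braid_word_def set_descending)
    have "high_coeff (Suc n) ((x @ ?V) @ [int m] @ ([int m] @ rev ?V)) =
       skein_coeff (high_coeff (Suc n) ((x @ ?V) @ [- int m] @ ([int m] @ rev ?V)))
         (high_coeff (Suc n) ((x @ ?V) @ ([int m] @ rev ?V)))"
      using skein_compatible_pos[OF skein_compatible_high_coeff, of "Suc n" "x @ ?V" "[int m] @ rev ?V" "int m"]
        xS words m by simp
    moreover have "high_coeff (Suc n) ((x @ ?V) @ [- int m, - (- int m)] @ rev ?V)
        = high_coeff (Suc n) ((x @ ?V) @ rev ?V)"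
      using xS words by (intro high_coeff_braid_equiv braid_equiv.cancel) auto
    moreover have "high_coeff (Suc n) (x @ ?V @ [int m] @ rev ?V) = (\<lambda>_. 0)"
      using high_coeff_descending_conjugate_eq_0[OF n] m x by simp
    ultimately show "?P m" using IH V by (simp add: skein_coeff_def)
  qed simp
  then show ?thesis by (simp add: loop_word_def)
qed

lemma high_coeff_append_top_loop_word:
  assumes n: "n \<ge> 1" and x: "braid_word n x"
  shows "high_coeff (Suc n) (x @ [int n] @ loop_word n) = (\<lambda>b. - high_coeff n x b)"
proof -
  let ?M = "loop_word (n - 1)"
  have M: "braid_word n ?M" using braid_word_loop_word[of "n - 1"] n by simp
  have words: "braid_word (Suc n) x" "braid_word (Suc n) ?M" "braid_word (Suc n) [int n]"
    using x M n braid_word_Suc by auto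
  have loop: "loop_word n = [int n] @ ?M @ [int n]" using loop_word_eq[OF n] .
  have "high_coeff (Suc n) (x @ [int n] @ ([int n] @ ?M @ [int n])) =
     skein_coeff (high_coeff (Suc n) (x @ [- int n] @ ([int n] @ ?M @ [int n])))
       (high_coeff (Suc n) (x @ ([int n] @ ?M @ [int n])))"
    using skein_compatible_pos[OF skein_compatible_high_coeff, of "Suc n" x "[int n] @ ?M @ [int n]" "int n"]
      words n by simp
  moreover have "high_coeff (Suc n) (x @ [- int n] @ ([int n] @ ?M @ [int n])) = (\<lambda>_. 0)"
  proof -
    have "high_coeff (Suc n) (x @ [- int n, - (- int n)] @ (?M @ [int n])) = high_coeff (Suc n) (x @ (?M @ [int n]))"
      using words by (intro high_coeff_braid_equiv braid_equiv.cancel) auto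
    also have "\<dots> = (\<lambda>_. 0)"
      using high_coeff_top_crossing_eq_0[OF n, of "x @ ?M" "[]"] x M by simp
    finally show ?thesis by simp
  qed
  moreover have "high_coeff (Suc n) (x @ ([int n] @ ?M @ [int n])) = (\<lambda>b. - high_coeff n x (b + 1))"
    using high_coeff_append_loop_word[OF n x] high_coeff_split_unknot[OF n x] loop by simp
  ultimately show ?thesis using loop by (simp add: skein_coeff_def fun_eq_iff)
qed

definition twisted_high_coeff :: "nat \<Rightarrow> int list \<Rightarrow> int \<Rightarrow> int" where
  "twisted_high_coeff n \<beta> = (\<lambda>b. (-1) ^ (n - 1) * high_coeff n (\<beta> @ garside n @ garside n) b)"

lemma skein_compatible_twisted_high_coeff:
  "skein_compatible n skein_coeff skein_coeff_neg (twisted_high_coeff n)"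
proof -
  have G: "braid_word n (garside n @ garside n)" using braid_word_garside by simp
  show ?thesis unfolding skein_compatible_def
  proof (intro conjI allI impI)
    fix w w' assume "braid_equiv n w w'"
    then show "twisted_high_coeff n w = twisted_high_coeff n w'"
      unfolding twisted_high_coeff_def using high_coeff_braid_equiv braid_equiv_append_right[OF _ G] by metis
  next
    fix u x i assume uxi: "braid_word n (u @ x) \<and> braid_word n [i] \<and> 0 < i"
    then have ux: "braid_word n (u @ (x @ garside n @ garside n))" using G by simp
    show "twisted_high_coeff n (u @ [i] @ x) =
        skein_coeff (twisted_high_coeff n (u @ [- i] @ x)) (twisted_high_coeff n (u @ x))"
      unfolding twisted_high_coeff_def skein_coeff_def
      using skein_compatible_pos[OF skein_compatible_high_coeff ux, of i] uxi
      by (auto simp: fun_eq_iff skein_coeff_def distrib_left)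
    show "twisted_high_coeff n (u @ [- i] @ x) =
        skein_coeff_neg (twisted_high_coeff n (u @ [i] @ x)) (twisted_high_coeff n (u @ x))"
      unfolding twisted_high_coeff_def skein_coeff_neg_def
      using skein_compatible_neg[OF skein_compatible_high_coeff ux, of i] uxi
      by (auto simp: fun_eq_iff skein_coeff_neg_def right_diff_distrib)
  qed
qed

lemma twisted_high_coeff_split_unknot:
  assumes n: "n \<ge> 1" and a: "braid_word n a"
  shows "twisted_high_coeff (Suc n) a = (\<lambda>b. twisted_high_coeff n a (b + 1))"
proof -
  let ?G = "garside n" and ?G' = "garside (Suc n)"
  have aGG: "braid_word n (a @ ?G @ ?G)" using a braid_word_garside by simp
  have "braid_equiv (Suc n) (a @ (?G' @ ?G') @ []) (a @ (?G @ ?G @ loop_word n) @ [])"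
    using a braid_word_Suc by (intro braid_equiv_context[OF garside_square_Suc]) auto
  then have "high_coeff (Suc n) (a @ ?G' @ ?G') = high_coeff (Suc n) ((a @ ?G @ ?G) @ loop_word n)"
    using high_coeff_braid_equiv by simp
  also have "\<dots> = high_coeff (Suc n) (a @ ?G @ ?G)" using high_coeff_append_loop_word[OF n aGG] .
  also have "\<dots> = (\<lambda>b. - high_coeff n (a @ ?G @ ?G) (b + 1))" using high_coeff_split_unknot[OF n aGG] .
  finally show ?thesis
    using n by (cases n) (simp_all add: twisted_high_coeff_def fun_eq_iff)
qed

lemma twisted_high_coeff_markov:
  assumes n: "n \<ge> 1" and a: "braid_word n a" and b: "braid_word n b"
  shows "twisted_high_coeff (Suc n) (a @ [int n] @ b) = twisted_high_coeff n (a @ b)"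
proof -
  let ?G = "garside n" and ?G' = "garside (Suc n)"
  have bGG: "braid_word n (b @ ?G @ ?G)" using b braid_word_garside by simp
  have top: "braid_word (Suc n) [int n]" using n by simp
  have "braid_equiv (Suc n) ((a @ [int n] @ b) @ (?G' @ ?G') @ []) ((a @ [int n] @ b) @ (?G @ ?G @ loop_word n) @ [])"
    using a b top braid_word_Suc by (intro braid_equiv_context[OF garside_square_Suc]) auto
  moreover have "braid_equiv (Suc n) ((a @ [int n]) @ ((b @ ?G @ ?G) @ loop_word n) @ [])
      ((a @ [int n]) @ (loop_word n @ (b @ ?G @ ?G)) @ [])"
    using a top braid_word_Suc by (intro braid_equiv_context[OF loop_word_central[OF bGG]]) auto
  ultimately have "high_coeff (Suc n) (a @ [int n] @ b @ ?G' @ ?G')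
      = high_coeff (Suc n) ((a @ [int n] @ loop_word n) @ (b @ ?G @ ?G))"
    using high_coeff_braid_equiv by simp
  also have "\<dots> = high_coeff (Suc n) ((b @ ?G @ ?G @ a) @ [int n] @ loop_word n)"
    using high_coeff_conj[of "Suc n" "a @ [int n] @ loop_word n" "b @ ?G @ ?G"]
      a bGG top braid_word_Suc braid_word_loop_word by simp
  also have "\<dots> = (\<lambda>c. - high_coeff n (b @ ?G @ ?G @ a) c)"
    using high_coeff_append_top_loop_word[OF n, of "b @ ?G @ ?G @ a"] a bGG by simp
  also have "\<dots> = (\<lambda>c. - high_coeff n (a @ b @ ?G @ ?G) c)"
    using high_coeff_conj[of n "b @ ?G @ ?G" a] a bGG by simp
  finally show ?thesis
    using n by (cases n) (simp_all add: twisted_high_coeff_def fun_eq_iff)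
qed

theorem low_coeff_eq_twisted_high_coeff:
  "n \<ge> 1 \<Longrightarrow> braid_word n \<beta> \<Longrightarrow> low_coeff n \<beta> = twisted_high_coeff n \<beta>"
proof (induction n arbitrary: \<beta> rule: nat_induct_at_least)
  case base
  then show ?case by (simp add: braid_word_Suc_0_iff low_coeff_def twisted_high_coeff_def high_coeff_def)
next
  case (Suc n)
  have "agree_on_lower_braids n (low_coeff (Suc n)) (twisted_high_coeff (Suc n))"
    unfolding agree_on_lower_braids_def
  proof (intro conjI allI impI)
    fix a assume "braid_word n a"
    then show "low_coeff (Suc n) a = twisted_high_coeff (Suc n) a"
      using low_coeff_split_unknot twisted_high_coeff_split_unknot Suc by simp
  next
    fix a b assume ab: "braid_word n a" "braid_word n b"
    then have "low_coeff (Suc n) (a @ [int n] @ b) = low_coeff n (a @ b)"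
      using low_coeff_markov[OF Suc.hyps ab] low_coeff_conj[of n b a] by simp
    then show "low_coeff (Suc n) (a @ [int n] @ b) = twisted_high_coeff (Suc n) (a @ [int n] @ b)"
      using twisted_high_coeff_markov[OF Suc.hyps ab] Suc.IH ab by simp
  qed
  then show ?case
    using skein_compatible_unique[OF skein_compatible_low_coeff skein_compatible_twisted_high_coeff]
      Suc.prems by blast
qed

end

theorem theorem1p5:
  fixes P :: "nat \<Rightarrow> int list \<Rightarrow> laurent2"
    and n :: nat and \<beta> :: "int list" and b :: int
  assumes "is_homfly P"
    and "n \<ge> 1"
    and "braid_word n \<beta>"
  shows "coeff2 (P n \<beta>) (exp_sum \<beta> - int n + 1) b =
         (-1) ^ (n - 1) *
         coeff2 (P n (\<beta> @ garside n @ garside n)) (exp_sum \<beta> + int n ^ 2 - 1) b"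
proof -
  interpret homfly P by (rule homfly.intro) fact
  have deg: "exp_sum (\<beta> @ garside n @ garside n) + int n - 1 = exp_sum \<beta> + int n ^ 2 - 1"
    using exp_sum_garside[of n] by (simp add: power2_eq_square algebra_simps)
  show ?thesis
    using fun_cong[OF low_coeff_eq_twisted_high_coeff[OF assms(2,3)], of b]
    unfolding low_coeff_def twisted_high_coeff_def high_coeff_def deg by simp
qed

end
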